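(* Let $G_1,G_2,H_1,H_2\in SL^+_{sym}(2)$ and let $g_i,h_i$ be the largest eigenvalues of $G_i,H_i$ ($i=1,2$). Then $$K^{min}\le\hat K:=\sqrt{g_1h_1g_2h_2}\le K:=\max\{g_1h_1,g_2h_2\}.$$ In particular $K^{min}<K$ whenever $g_1h_1\ne g_2h_2$.
   Context: $SL^+_{sym}(2)$: real symmetric positive definite $2\times2$ matrices with determinant $1$; $SL(2)$: real $2\times2$ matrices of determinant $1$; $\lambda_{\max}(M)$: largest eigenvalue of a symmetric $M$. For $G_1,G_2,H_1,H_2\in SL^+_{sym}(2)$ (the two phases of the two-phase fields $G=\chi_{E_1}G_1+\chi_{E_2}G_2$, $H=\chi_{E_1}H_1+\chi_{E_2}H_2$ with $E_1,E_2$ a measurable partition of $\Omega$ into sets of positive measure), define $$K^{min}:=\min_{A,B\in SL(2)}\ \max_{i=1,2}\ \lambda_{\max}(B^TG_iB)\,\lambda_{\max}(A^TH_iA).$$ *)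

theory Defs
  imports "HOL-Analysis.Analysis"
begin

definition SL2 :: "(real^2^2) set" where
  "SL2 = {A. det A = 1}"

definition SL2_sym_pos :: "(real^2^2) set" where
  "SL2_sym_pos = {M. transpose M = M \<and> (\<forall>v. v \<noteq> 0 \<longrightarrow> v \<bullet> (M *v v) > 0) \<and> det M = 1}"

definition eigenvalues :: "real^'n^'n \<Rightarrow> real set" where
  "eigenvalues M = {l. \<exists>v. v \<noteq> 0 \<and> M *v v = l *\<^sub>R v}"

definition lambda_max :: "real^'n^'n \<Rightarrow> real" where
  "lambda_max M = Max (eigenvalues M)"

definition Kmin :: "real^2^2 \<Rightarrow> real^2^2 \<Rightarrow> real^2^2 \<Rightarrow> real^2^2 \<Rightarrow> real" where
  "Kmin G1 G2 H1 H2 = (INF AB \<in> SL2 \<times> SL2.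
     (let A = fst AB; B = snd AB in
      max (lambda_max (transpose B ** G1 ** B) * lambda_max (transpose A ** H1 ** A))
          (lambda_max (transpose B ** G2 ** B) * lambda_max (transpose A ** H2 ** A))))"

end

theory Submission
  imports Defs
begin

text \<open>
  Let \<open>P = g\<^sub>1h\<^sub>1 \<ge> Q = g\<^sub>2h\<^sub>2\<close>. For \<open>G \<in> SL\<^sup>+\<^sub>s\<^sub>y\<^sub>m(2)\<close> with largest eigenvalue \<open>g\<close>
  and any \<open>x \<in> [1/g, 1]\<close>, the matrix \<open>B = \<alpha>I + \<beta>G\<close> acting as \<open>\<surd>x\<close> and \<open>1/\<surd>x\<close> on the
  eigenvectors of \<open>G\<close> has determinant 1, brings \<open>\<lambda>\<^sub>m\<^sub>a\<^sub>x(B\<^sup>TGB)\<close> down to \<open>gx\<close>, and stretches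
  vectors by at most \<open>1/\<surd>x\<close>, so \<open>\<lambda>\<^sub>m\<^sub>a\<^sub>x(B\<^sup>TMB) \<le> \<lambda>\<^sub>m\<^sub>a\<^sub>x(M)/x\<close> for every positive
  semidefinite \<open>M\<close>. Factoring \<open>t = \<surd>(Q/P)\<close> as \<open>xy\<close> with \<open>x\<close> admissible for \<open>G\<^sub>1\<close> and \<open>y\<close>
  for \<open>H\<^sub>1\<close>, both products in \<open>K\<^sup>m\<^sup>i\<^sup>n\<close> are at most \<open>Pt = Q/t = \<surd>(PQ)\<close>, the geometric mean of
  \<open>P\<close> and \<open>Q\<close>, which lies below \<open>max P Q\<close> and strictly so when \<open>P \<noteq> Q\<close>.
\<close>

lemma symmetric_matrix_entry: "transpose M = M \<Longrightarrow> M $ i $ j = M $ j $ i"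
  by (metis transpose_def vec_lambda_beta)

lemma eigenvalues_iff_det:
  fixes M :: "real^'n^'n"
  shows "l \<in> eigenvalues M \<longleftrightarrow> det (M - l *\<^sub>R mat 1) = 0"
proof -
  have "l \<in> eigenvalues M \<longleftrightarrow> (\<exists>v. v \<noteq> 0 \<and> (M - l *\<^sub>R mat 1) *v v = 0)"
    by (simp add: eigenvalues_def matrix_vector_mult_diff_rdistrib
        scaleR_matrix_vector_assoc[symmetric])
  also have "\<dots> \<longleftrightarrow> det (M - l *\<^sub>R mat 1) = 0"
    using rank_bound[of "M - l *\<^sub>R mat 1"]
    by (auto simp: matrix_nonfull_linear_equations_eq det_eq_0_rank)
  finally show ?thesis .
qed

definition eigengap :: "real^2^2 \<Rightarrow> real" where
  "eigengap M = sqrt ((M$1$1 - M$2$2)^2 + 4 * (M$1$2)^2)"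

lemma trace_2: "trace (M :: 'a::semiring_1^2^2) = M$1$1 + M$2$2"
  by (simp add: trace_def sum_2)

lemma det_symmetric_2x2:
  fixes M :: "real^2^2"
  assumes "transpose M = M"
  shows "det M = M$1$1 * M$2$2 - (M$1$2)^2"
  using symmetric_matrix_entry[OF assms, of 2 1] by (simp add: det_2 power2_eq_square)

lemma eigengap_sq:
  fixes M :: "real^2^2"
  assumes "transpose M = M"
  shows "(eigengap M)^2 = (trace M)^2 - 4 * det M"
proof -
  have "(eigengap M)^2 = (M$1$1 - M$2$2)^2 + 4 * (M$1$2)^2"
    unfolding eigengap_def by simp
  then show ?thesis
    by (simp add: trace_2 det_symmetric_2x2[OF assms] power2_eq_square algebra_simps)
qed

lemma eigenvalues_symmetric_2x2:
  fixes M :: "real^2^2"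
  assumes "transpose M = M"
  shows "eigenvalues M = {(trace M + eigengap M) / 2, (trace M - eigengap M) / 2}"
proof -
  have "det (M - l *\<^sub>R mat 1) = ((l - (trace M + eigengap M) / 2) * (l - (trace M - eigengap M) / 2))"
    for l
    using eigengap_sq[OF assms] symmetric_matrix_entry[OF assms, of 2 1]
    by (simp add: det_2 trace_2 mat_def power2_eq_square) (simp add: field_simps)
  then show ?thesis
    by (auto simp: eigenvalues_iff_det)
qed

lemma lambda_max_symmetric_2x2:
  fixes M :: "real^2^2"
  assumes "transpose M = M"
  shows "lambda_max M = (trace M + eigengap M) / 2"
  unfolding lambda_max_def eigenvalues_symmetric_2x2[OF assms] eigengap_def by simp

lemma lambda_max_in_eigenvalues:
  fixes M :: "real^2^2"
  assumes "transpose M = M"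
  shows "lambda_max M \<in> eigenvalues M"
  by (simp add: lambda_max_symmetric_2x2[OF assms] eigenvalues_symmetric_2x2[OF assms])

lemma quadratic_form_2:
  fixes M :: "real^2^2"
  assumes "transpose M = M"
  shows "v \<bullet> (M *v v) = M$1$1 * (v$1)^2 + 2 * M$1$2 * (v$1 * v$2) + M$2$2 * (v$2)^2"
  using symmetric_matrix_entry[OF assms, of 2 1]
  by (simp add: inner_vec_def matrix_vector_mult_def sum_2 power2_eq_square algebra_simps)

lemma quadratic_form_le_lambda_max:
  fixes M :: "real^2^2"
  assumes sym: "transpose M = M"
  shows "v \<bullet> (M *v v) \<le> lambda_max M * (v \<bullet> v)"
proof -
  define p where "p = lambda_max M - M$1$1"
  define q where "q = lambda_max M - M$2$2"
  define b where "b = M$1$2"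
  have "\<bar>M$1$1 - M$2$2\<bar> \<le> eigengap M"
    unfolding eigengap_def by (rule real_le_rsqrt) (simp add: power2_eq_square)
  then have pq: "p \<ge> 0" "q \<ge> 0"
    unfolding p_def q_def lambda_max_symmetric_2x2[OF sym] trace_2 by auto
  have "det (M - lambda_max M *\<^sub>R mat 1) = 0"
    using lambda_max_in_eigenvalues[OF sym] eigenvalues_iff_det by blast
  then have pqb: "p * q = b^2"
    using symmetric_matrix_entry[OF sym, of 2 1]
    by (simp add: det_2 mat_def p_def q_def b_def power2_eq_square algebra_simps)
  define x where "x = v$1"
  define y where "y = v$2"
  have sos: "(p + q) * (p * x^2 - 2 * b * (x * y) + q * y^2) = (p * x - b * y)^2 + (q * y - b * x)^2"
    using pqb by algebra
  have "p * x^2 - 2 * b * (x * y) + q * y^2 \<ge> 0"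
  proof (cases "p + q = 0")
    case True
    then have "p = 0" "q = 0"
      using pq by linarith+
    then show ?thesis
      using pqb by simp
  next
    case False
    then have "p + q > 0" using pq by simp
    moreover have "(p + q) * (p * x^2 - 2 * b * (x * y) + q * y^2) \<ge> 0"
      unfolding sos by simp
    ultimately show ?thesis by (simp add: zero_le_mult_iff)
  qed
  moreover have "v \<bullet> v = x^2 + y^2"
    by (simp add: inner_vec_def sum_2 power2_eq_square x_def y_def)
  ultimately show ?thesis
    unfolding quadratic_form_2[OF sym] by (simp add: p_def q_def b_def x_def y_def algebra_simps)
qed

lemma lambda_max_le_if_quadratic_form_le:
  fixes M :: "real^2^2"
  assumes "transpose M = M" and "\<And>v. v \<bullet> (M *v v) \<le> c * (v \<bullet> v)"
  shows "lambda_max M \<le> c"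
proof -
  obtain v where v: "v \<noteq> 0" "M *v v = lambda_max M *\<^sub>R v"
    using lambda_max_in_eigenvalues[OF assms(1)] by (auto simp: eigenvalues_def)
  then show ?thesis
    using assms(2)[of v] by simp
qed

lemma lambda_max_nonneg:
  fixes M :: "real^2^2"
  assumes "transpose M = M" and "\<And>v. 0 \<le> v \<bullet> (M *v v)"
  shows "0 \<le> lambda_max M"
proof -
  obtain v where v: "v \<noteq> 0" "M *v v = lambda_max M *\<^sub>R v"
    using lambda_max_in_eigenvalues[OF assms(1)] by (auto simp: eigenvalues_def)
  then have "0 \<le> lambda_max M * (v \<bullet> v)" "0 < v \<bullet> v"
    using assms(2)[of v] by simp_all
  then show ?thesis
    by (simp add: zero_le_mult_iff)
qed

lemma lambda_max_eq_if_det_trace: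
  fixes M :: "real^2^2"
  assumes sym: "transpose M = M" and "det M = 1" and tr: "trace M = y + 1 / y" and "1 \<le> y"
  shows "lambda_max M = y"
proof -
  have "(eigengap M)^2 = (y + 1 / y)^2 - 4"
    by (simp add: eigengap_sq[OF sym] tr \<open>det M = 1\<close>)
  also have "\<dots> = (y - 1 / y)^2"
    using \<open>1 \<le> y\<close> by (simp add: power2_eq_square field_simps)
  finally have "(eigengap M)^2 = (y - 1 / y)^2" .
  moreover have "0 \<le> y - 1 / y"
    using \<open>1 \<le> y\<close> order_trans[of "1 / y" 1 y] by simp
  moreover have "0 \<le> eigengap M"
    unfolding eigengap_def by simp
  ultimately have "eigengap M = y - 1 / y"
    by (metis power2_eq_iff_nonneg)
  then show ?thesis
    by (simp add: lambda_max_symmetric_2x2[OF sym] tr)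
qed

lemma SL2_sym_posD:
  assumes "G \<in> SL2_sym_pos"
  shows "transpose G = G" "det G = 1" "\<And>v. v \<noteq> 0 \<Longrightarrow> 0 < v \<bullet> (G *v v)"
    and "\<And>v. 0 \<le> v \<bullet> (G *v v)"
proof -
  show "transpose G = G" "det G = 1" "\<And>v. v \<noteq> 0 \<Longrightarrow> 0 < v \<bullet> (G *v v)"
    using assms by (simp_all add: SL2_sym_pos_def)
  then show "0 \<le> v \<bullet> (G *v v)" for v
    by (cases "v = 0") (simp_all add: less_imp_le)
qed

lemma lambda_max_SL2_sym_pos:
  assumes G: "G \<in> SL2_sym_pos"
  shows "1 \<le> lambda_max G" "trace G = lambda_max G + 1 / lambda_max G"
proof -
  note sym = SL2_sym_posD(1)[OF G]
  define L where "L = lambda_max G"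
  define m where "m = (trace G - eigengap G) / 2"
  obtain v where v: "v \<noteq> 0" "G *v v = m *\<^sub>R v"
    using eigenvalues_symmetric_2x2[OF sym] unfolding m_def eigenvalues_def by blast
  then have "0 < m * (v \<bullet> v)" "0 < v \<bullet> v"
    using SL2_sym_posD(3)[OF G v(1)] by simp_all
  then have "0 < m"
    by (simp add: zero_less_mult_iff)
  moreover have "L * m = 1"
    using eigengap_sq[OF sym] SL2_sym_posD(2)[OF G]
    unfolding L_def m_def lambda_max_symmetric_2x2[OF sym] by (simp add: field_simps power2_eq_square)
  moreover have "m \<le> L"
    unfolding L_def m_def lambda_max_symmetric_2x2[OF sym] eigengap_def by simp
  ultimately show "1 \<le> L"
    using mult_strict_mono[of L 1 m 1] by linarith
  moreover have "trace G = L + m"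
    unfolding L_def m_def lambda_max_symmetric_2x2[OF sym] by (simp add: field_simps)
  ultimately show "trace G = L + 1 / L"
    using \<open>L * m = 1\<close> by (simp add: field_simps)
qed

lemma inner_congruence:
  fixes B M :: "real^'n^'n"
  shows "v \<bullet> ((transpose B ** M ** B) *v v) = (B *v v) \<bullet> (M *v (B *v v))"
proof -
  have "(transpose B ** M ** B) *v v = transpose B *v (M *v (B *v v))"
    by (simp add: matrix_vector_mul_assoc matrix_mul_assoc)
  moreover have "(B *v v) \<bullet> w = v \<bullet> (transpose B *v w)" for w
    using dot_lmul_matrix[of v "transpose B" w] by (simp only: vector_transpose_matrix)
  ultimately show ?thesis
    by simp
qed

lemma transpose_congruence:
  fixes B M :: "real^'n^'n"
  assumes "transpose M = M"
  shows "transpose (transpose B ** M ** B) = transpose B ** M ** B"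
  using assms by (simp add: matrix_transpose_mul matrix_mul_assoc)

lemma lambda_max_congruence_nonneg:
  fixes B M :: "real^2^2"
  assumes "transpose M = M" and "\<And>v. 0 \<le> v \<bullet> (M *v v)"
  shows "0 \<le> lambda_max (transpose B ** M ** B)"
  by (rule lambda_max_nonneg[OF transpose_congruence[OF assms(1)]]) (simp add: inner_congruence assms(2))

lemma lambda_max_congruence_le:
  fixes B M :: "real^2^2"
  assumes sym: "transpose M = M" and psd: "\<And>v. 0 \<le> v \<bullet> (M *v v)"
    and B: "\<And>v. (B *v v) \<bullet> (B *v v) \<le> c * (v \<bullet> v)"
  shows "lambda_max (transpose B ** M ** B) \<le> lambda_max M * c"
proof (rule lambda_max_le_if_quadratic_form_le[OF transpose_congruence[OF sym]])
  fix v :: "real^2"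
  have "v \<bullet> ((transpose B ** M ** B) *v v) = (B *v v) \<bullet> (M *v (B *v v))"
    by (rule inner_congruence)
  also have "\<dots> \<le> lambda_max M * ((B *v v) \<bullet> (B *v v))"
    by (rule quadratic_form_le_lambda_max[OF sym])
  also have "\<dots> \<le> lambda_max M * (c * (v \<bullet> v))"
    by (rule mult_left_mono[OF B lambda_max_nonneg[OF sym psd]])
  finally show "v \<bullet> ((transpose B ** M ** B) *v v) \<le> lambda_max M * c * (v \<bullet> v)"
    by (simp add: mult.assoc)
qed

lemma matrix_mult_2_entry: "((A :: 'a::semiring_1^2^2) ** B) $ i $ j = A$i$1 * B$1$j + A$i$2 * B$2$j"
  by (simp add: matrix_matrix_mult_def sum_2)

lemma det_trace_affine_in_symmetric_2x2:
  fixes G :: "real^2^2"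
  assumes sym: "transpose G = G" and "det G = 1" and "trace G = g + c" and "g * c = 1"
    and "\<alpha> + \<beta> * g = \<mu>" and "\<alpha> + \<beta> * c = \<nu>" and "\<mu> * \<nu> = 1"
  defines "B \<equiv> \<alpha> *\<^sub>R mat 1 + \<beta> *\<^sub>R G"
  shows "det B = 1"
    and "trace (transpose B ** G ** B) = g * \<mu>^2 + c * \<nu>^2"
    and "trace (transpose B ** B) = \<mu>^2 + \<nu>^2"
proof -
  define a b d where "a = G$1$1" and "b = G$1$2" and "d = G$2$2"
  have G_entries: "G$1$1 = a" "G$1$2 = b" "G$2$1 = b" "G$2$2 = d"
    using symmetric_matrix_entry[OF sym, of 2 1] by (simp_all add: a_def b_def d_def)
  have B_entries: "B$1$1 = \<alpha> + \<beta> * a" "B$1$2 = \<beta> * b" "B$2$1 = \<beta> * b" "B$2$2 = \<alpha> + \<beta> * d"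
    by (simp_all add: B_def mat_def G_entries)
  have "a + d = g + c" "a * d - b^2 = 1"
    using assms(2,3) by (simp_all add: trace_2 det_symmetric_2x2[OF sym] G_entries)
  with assms(4-7) show "det B = 1"
    and "trace (transpose B ** G ** B) = g * \<mu>^2 + c * \<nu>^2"
    and "trace (transpose B ** B) = \<mu>^2 + \<nu>^2"
    by (simp_all add: det_2 trace_2 matrix_mult_2_entry transpose_def B_entries G_entries) algebra+
qed

lemma SL2_congruence_rescaling:
  fixes G :: "real^2^2"
  assumes G: "G \<in> SL2_sym_pos" and x: "1 / lambda_max G \<le> x" "x \<le> 1"
  obtains B where "det B = 1" "lambda_max (transpose B ** G ** B) = lambda_max G * x"
    and "\<And>v. (B *v v) \<bullet> (B *v v) \<le> (1 / x) * (v \<bullet> v)"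
proof -
  note sym = SL2_sym_posD(1)[OF G]
  define g where "g = lambda_max G"
  define c where "c = 1 / g"
  have g: "1 \<le> g" "trace G = g + c" "g * c = 1"
    using lambda_max_SL2_sym_pos[OF G] unfolding g_def c_def by simp_all
  have "0 < 1 / g"
    using g(1) by simp
  then have "0 < x"
    using x(1) unfolding g_def by linarith
  define \<mu> where "\<mu> = sqrt x"
  define \<nu> where "\<nu> = 1 / \<mu>"
  have \<mu>: "\<mu>^2 = x" "\<nu>^2 = 1 / x" "\<mu> * \<nu> = 1"
    using \<open>0 < x\<close> by (simp_all add: \<mu>_def \<nu>_def power_divide)
  \<comment> \<open>\<open>\<alpha> I + \<beta> G\<close> acts as \<open>\<mu>, \<nu>\<close> on the eigenvectors of \<open>G\<close> for \<open>g, c\<close>. If \<open>g = c\<close>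
    then \<open>x = 1\<close>, and the junk value \<open>\<beta> = 0\<close> of the division by zero is still right.\<close>
  define \<beta> where "\<beta> = (\<mu> - \<nu>) / (g - c)"
  define \<alpha> where "\<alpha> = \<mu> - \<beta> * g"
  have "\<beta> * (g - c) = \<mu> - \<nu>"
  proof (cases "g = c")
    case True
    then have "x = 1"
      using g(1,3) x by (simp add: c_def g_def)
    then show ?thesis
      using True by (simp add: \<mu>_def \<nu>_def)
  qed (simp add: \<beta>_def)
  then have \<alpha>\<beta>: "\<alpha> + \<beta> * g = \<mu>" "\<alpha> + \<beta> * c = \<nu>"
    by (simp_all add: \<alpha>_def algebra_simps)
  define B where "B = \<alpha> *\<^sub>R mat 1 + \<beta> *\<^sub>R G"
  note B = det_trace_affine_in_symmetric_2x2[OF sym SL2_sym_posD(2)[OF G] g(2,3) \<alpha>\<beta> \<mu>(3), folded B_def]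
  have "lambda_max (transpose B ** G ** B) = g * x"
    using g(1) x(1) B(1,2) SL2_sym_posD(2)[OF G] \<mu>
    by (intro lambda_max_eq_if_det_trace transpose_congruence sym)
      (simp_all add: det_mul c_def g_def field_simps)
  have "lambda_max (transpose B ** B) = 1 / x"
    using \<open>0 < x\<close> x(2) B(1,3) \<mu>
    by (intro lambda_max_eq_if_det_trace) (simp_all add: det_mul matrix_transpose_mul)
  have "(B *v v) \<bullet> (B *v v) \<le> (1 / x) * (v \<bullet> v)" for v
  proof -
    have "(B *v v) \<bullet> (B *v v) = v \<bullet> ((transpose B ** B) *v v)"
      using inner_congruence[of v B "mat 1"] by simp
    also have "\<dots> \<le> lambda_max (transpose B ** B) * (v \<bullet> v)"
      by (intro quadratic_form_le_lambda_max) (simp add: matrix_transpose_mul)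
    finally show ?thesis
      using \<open>lambda_max (transpose B ** B) = 1 / x\<close> by simp
  qed
  then show ?thesis
    using that B(1) \<open>lambda_max (transpose B ** G ** B) = g * x\<close> g_def by blast
qed

lemma split_factor_between_reciprocals:
  fixes g h t :: real
  assumes "1 \<le> g" "1 \<le> h" "1 / (g * h) \<le> t" "t \<le> 1"
  obtains x y where "1 / g \<le> x" "x \<le> 1" "1 / h \<le> y" "y \<le> 1" "x * y = t"
proof
  define x where "x = max t (1 / g)"
  have "0 < 1 / (g * h)"
    using assms(1,2) by simp
  then have "0 < t"
    using assms(3) by linarith
  then show "1 / g \<le> x" "x \<le> 1" "x * (t / x) = t" "t / x \<le> 1"
    using assms(1,4) by (auto simp: x_def)
  show "1 / h \<le> t / x"
  proof (cases "1 / g \<le> t")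
    case True
    then show ?thesis
      using \<open>0 < t\<close> assms(2) by (simp add: x_def)
  next
    case False
    have "1 / h = g * (1 / (g * h))"
      using assms(1) by simp
    also have "\<dots> \<le> g * t"
      by (rule mult_left_mono) (use assms(1,3) in auto)
    finally show ?thesis
      using False by (simp add: x_def mult.commute)
  qed
qed

lemma sqrt_mult_le_max:
  fixes p q :: real
  assumes "0 \<le> p" "0 \<le> q"
  shows "sqrt (p * q) \<le> max p q"
  using real_sqrt_le_mono[of "p * q" "max p q * max p q"] assms
  by (simp add: mult_mono)

lemma sqrt_mult_less_max:
  fixes p q :: real
  assumes "0 \<le> p" "0 \<le> q" "p \<noteq> q"
  shows "sqrt (p * q) < max p q"
proof -
  have "p * q < max p q * max p q"
    using assms by (cases "p < q") (auto simp: max_def intro: mult_strict_left_mono mult_strict_right_mono)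
  then show ?thesis
    using real_sqrt_less_mono[of "p * q" "max p q * max p q"] assms by simp
qed

lemma Kmin_swap: "Kmin G1 G2 H1 H2 = Kmin G2 G1 H2 H1"
  unfolding Kmin_def by (simp add: max.commute)

lemma Kmin_le:
  assumes G1: "G1 \<in> SL2_sym_pos" and H1: "H1 \<in> SL2_sym_pos" and "det A = 1" "det B = 1"
  shows "Kmin G1 G2 H1 H2 \<le>
    max (lambda_max (transpose B ** G1 ** B) * lambda_max (transpose A ** H1 ** A))
        (lambda_max (transpose B ** G2 ** B) * lambda_max (transpose A ** H2 ** A))"
proof -
  have "0 \<le> lambda_max (transpose B' ** G1 ** B') * lambda_max (transpose A' ** H1 ** A')"
    for A' B' :: "real^2^2"
    by (intro mult_nonneg_nonneg lambda_max_congruence_nonneg SL2_sym_posD[OF G1] SL2_sym_posD[OF H1])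
  then have "bdd_below ((\<lambda>AB. let A = fst AB; B = snd AB in
      max (lambda_max (transpose B ** G1 ** B) * lambda_max (transpose A ** H1 ** A))
          (lambda_max (transpose B ** G2 ** B) * lambda_max (transpose A ** H2 ** A))) ` (SL2 \<times> SL2))"
    by (intro bdd_belowI[of _ 0]) (force simp: Let_def le_max_iff_disj)
  moreover have "(A, B) \<in> SL2 \<times> SL2"
    using assms by (simp add: SL2_def)
  ultimately show ?thesis
    unfolding Kmin_def by (rule cINF_lower2) simp
qed

lemma balancing_factor:
  fixes P Q :: real
  assumes "1 \<le> Q" "Q \<le> P"
  shows "1 / P \<le> sqrt (Q / P)" "sqrt (Q / P) \<le> 1"
    and "P * sqrt (Q / P) = sqrt (P * Q)" "Q / sqrt (Q / P) = sqrt (P * Q)"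
proof -
  have "0 < P" "0 < Q"
    using assms by linarith+
  have "1 / P \<le> 1"
    using assms by simp
  then have "1 / P \<le> sqrt (1 / P)"
    using mult_left_le[of "1 / P" "1 / P"] \<open>0 < P\<close> by (intro real_le_rsqrt) (simp add: power2_eq_square)
  also have "\<dots> \<le> sqrt (Q / P)"
    using assms \<open>0 < P\<close> by (simp add: divide_right_mono)
  finally show "1 / P \<le> sqrt (Q / P)" .
  show "sqrt (Q / P) \<le> 1"
    using assms \<open>0 < P\<close> by simp
  have "P = sqrt P * sqrt P" "Q = sqrt Q * sqrt Q"
    using \<open>0 < P\<close> \<open>0 < Q\<close> by simp_all
  then show "P * sqrt (Q / P) = sqrt (P * Q)" "Q / sqrt (Q / P) = sqrt (P * Q)"
    using \<open>0 < P\<close> \<open>0 < Q\<close> by (simp_all add: real_sqrt_divide real_sqrt_mult field_simps)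
qed

lemma Kmin_le_geometric_mean:
  fixes G1 G2 H1 H2 :: "real^2^2"
  assumes G1: "G1 \<in> SL2_sym_pos" and G2: "G2 \<in> SL2_sym_pos"
    and H1: "H1 \<in> SL2_sym_pos" and H2: "H2 \<in> SL2_sym_pos"
    and le: "lambda_max G2 * lambda_max H2 \<le> lambda_max G1 * lambda_max H1"
  shows "Kmin G1 G2 H1 H2 \<le> sqrt ((lambda_max G1 * lambda_max H1) * (lambda_max G2 * lambda_max H2))"
proof -
  define g1 g2 h1 h2 where "g1 = lambda_max G1" and "g2 = lambda_max G2"
    and "h1 = lambda_max H1" and "h2 = lambda_max H2"
  have ge1: "1 \<le> g1" "1 \<le> g2" "1 \<le> h1" "1 \<le> h2"
    using lambda_max_SL2_sym_pos(1) G1 G2 H1 H2 by (simp_all add: g1_def g2_def h1_def h2_def)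
  define P Q where "P = g1 * h1" and "Q = g2 * h2"
  have "1 \<le> Q" "Q \<le> P"
    using mult_mono[of 1 g2 1 h2] ge1 le by (simp_all add: P_def Q_def g1_def g2_def h1_def h2_def)
  define t where "t = sqrt (Q / P)"
  note t = balancing_factor[OF \<open>1 \<le> Q\<close> \<open>Q \<le> P\<close>, folded t_def]
  obtain x y where x: "1 / g1 \<le> x" "x \<le> 1" and y: "1 / h1 \<le> y" "y \<le> 1"
    and "x * y = t"
    using split_factor_between_reciprocals[OF ge1(1,3)] t(1,2) unfolding P_def by blast
  have "0 < 1 / g1" "0 < 1 / h1"
    using ge1 by simp_all
  then have "0 < x" "0 < y"
    using x(1) y(1) by linarith+
  obtain B where B: "det B = 1" "lambda_max (transpose B ** G1 ** B) = g1 * x"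
    and B_norm: "\<And>v. (B *v v) \<bullet> (B *v v) \<le> (1 / x) * (v \<bullet> v)"
    using SL2_congruence_rescaling[OF G1] x unfolding g1_def by blast
  obtain A where A: "det A = 1" "lambda_max (transpose A ** H1 ** A) = h1 * y"
    and A_norm: "\<And>v. (A *v v) \<bullet> (A *v v) \<le> (1 / y) * (v \<bullet> v)"
    using SL2_congruence_rescaling[OF H1] y unfolding h1_def by blast
  have "lambda_max (transpose B ** G1 ** B) * lambda_max (transpose A ** H1 ** A) = P * t"
    using \<open>x * y = t\<close> by (simp add: A B P_def algebra_simps)
  moreover have "lambda_max (transpose B ** G2 ** B) * lambda_max (transpose A ** H2 ** A)
      \<le> (g2 * (1 / x)) * (h2 * (1 / y))"
    unfolding g2_def h2_def using SL2_sym_posD[OF G2] SL2_sym_posD[OF H2]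
    by (intro mult_mono lambda_max_congruence_le lambda_max_congruence_nonneg B_norm A_norm)
      (use ge1 \<open>0 < x\<close> in \<open>simp_all add: g2_def\<close>)
  moreover have "(g2 * (1 / x)) * (h2 * (1 / y)) = Q / t"
    using \<open>x * y = t\<close> by (simp add: Q_def)
  ultimately show ?thesis
    using Kmin_le[OF G1 H1 A(1) B(1), of G2 H2] t(3,4)
    unfolding P_def Q_def g1_def g2_def h1_def h2_def by simp
qed

theorem mainTheorem6:
  fixes G1 G2 H1 H2 :: "real^2^2"
  assumes "G1 \<in> SL2_sym_pos" "G2 \<in> SL2_sym_pos" "H1 \<in> SL2_sym_pos" "H2 \<in> SL2_sym_pos"
  defines "g1 \<equiv> lambda_max G1" and "g2 \<equiv> lambda_max G2"
      and "h1 \<equiv> lambda_max H1" and "h2 \<equiv> lambda_max H2"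
  shows "Kmin G1 G2 H1 H2 \<le> sqrt (g1 * h1 * g2 * h2)
         \<and> sqrt (g1 * h1 * g2 * h2) \<le> max (g1 * h1) (g2 * h2)
         \<and> (g1 * h1 \<noteq> g2 * h2 \<longrightarrow> Kmin G1 G2 H1 H2 < max (g1 * h1) (g2 * h2))"
proof -
  have "Kmin G1 G2 H1 H2 \<le> sqrt ((g1 * h1) * (g2 * h2))"
  proof (cases "g2 * h2 \<le> g1 * h1")
    case True
    then show ?thesis
      using Kmin_le_geometric_mean[OF assms(1-4)] unfolding g1_def g2_def h1_def h2_def by blast
  next
    case False
    then show ?thesis
      using Kmin_le_geometric_mean[OF assms(2,1,4,3)] Kmin_swap[of G1]
      unfolding g1_def g2_def h1_def h2_def by (simp add: mult.commute)
  qed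
  moreover have "0 \<le> g1 * h1" "0 \<le> g2 * h2"
    using lambda_max_SL2_sym_pos(1) assms(1-4) unfolding g1_def g2_def h1_def h2_def
    by (meson mult_nonneg_nonneg order_trans zero_le_one)+
  moreover have "sqrt (g1 * h1 * g2 * h2) = sqrt ((g1 * h1) * (g2 * h2))"
    by (simp add: mult.assoc)
  ultimately show ?thesis
    using sqrt_mult_le_max sqrt_mult_less_max by (metis order_le_less_trans)
qed

end
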